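(* Let $\lambda>0$, $\mathbf{A}\in\mathbb{R}^{m\times n}$ with columns $\mathbf{a}_1,\dots,\mathbf{a}_n$, let $f:\mathbb{R}^m\to\mathbb{R}\cup\{+\infty\}$, and let $h:\mathbb{R}\to\mathbb{R}\cup\{+\infty\}$ be proper, closed and convex with $0\in\mathrm{dom}(h)$, $h(0)=0$, and $0$ an accumulation point of $\mathrm{dom}(h)$. Let $\nu=(\mathcal{S}_0,\mathcal{S}_1,\mathcal{S}_\bullet)$ and $\nu'=(\mathcal{S}_0',\mathcal{S}_1',\mathcal{S}_\bullet')$ be partitions of $\{1,\dots,n\}$ such that $\mathcal{S}_0\subseteq\mathcal{S}_0'$, $\mathcal{S}_1\subseteq\mathcal{S}_1'$ and $(\mathcal{S}_0'\setminus\mathcal{S}_0)\cup(\mathcal{S}_1'\setminus\mathcal{S}_1)=\{i\}$ for some $i\in\mathcal{S}_\bullet$. Then for all $\mathbf{u}\in\mathbb{R}^m$, $$D^{\nu'}(\mathbf{u})=D^\nu(\mathbf{u})+\begin{cases}\phi_0(\mathbf{a}_i^\top\mathbf{u}) & \text{if } i\in\mathcal{S}_0',\\ \phi_1(\mathbf{a}_i^\top\mathbf{u}) & \text{if } i\in\mathcal{S}_1'.\end{cases}$$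
   Context: $\|\mathbf{x}\|_0$ is the number of nonzero entries of $\mathbf{x}$; $\eta(\text{condition})=0$ if the condition holds and $+\infty$ otherwise; $\omega^*$ denotes the convex conjugate of $\omega$. An accumulation point $0$ of a set $\mathcal{C}\subseteq\mathbb{R}$: every neighborhood of $0$ contains a point of $\mathcal{C}$ other than $0$. For a partition $\nu=(\mathcal{S}_0,\mathcal{S}_1,\mathcal{S}_\bullet)$: $\mathcal{X}^\nu=\{\mathbf{x}\in\mathbb{R}^n: x_j=0\ \forall j\in\mathcal{S}_0,\ x_j\neq0\ \forall j\in\mathcal{S}_1\}$; $g^\nu(\mathbf{x})=\lambda\|\mathbf{x}\|_0+\sum_{j=1}^n h(x_j)+\eta(\mathbf{x}\in\mathcal{X}^\nu)$; $D^\nu(\mathbf{u})=-f^*(-\mathbf{u})-(g^\nu)^*(\mathbf{A}^\top\mathbf{u})$. Also $\phi_0(v)=\max(h^*(v)-\lambda,0)$ and $\phi_1(v)=\max(\lambda-h^*(v),0)$. *)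

theory Defs
  imports "HOL-Analysis.Analysis"
begin

text \<open>Extended-real valued functions R^k -> R \<union> {+inf}: values in ereal, never -inf.\<close>

definition epigraph_e :: "('a \<Rightarrow> ereal) \<Rightarrow> ('a \<times> real) set" where
  "epigraph_e w = {(x, t). w x \<le> ereal t}"

definition edom :: "('a \<Rightarrow> ereal) \<Rightarrow> 'a set" where
  "edom w = {x. w x < \<infinity>}"

definition proper_fun :: "('a \<Rightarrow> ereal) \<Rightarrow> bool" where
  "proper_fun w \<longleftrightarrow> (\<forall>x. w x \<noteq> -\<infinity>) \<and> (\<exists>x. w x < \<infinity>)"

definition closed_fun :: "('a::topological_space \<Rightarrow> ereal) \<Rightarrow> bool" where
  "closed_fun w \<longleftrightarrow> closed (epigraph_e w)"

definition convex_fun :: "('a::real_vector \<Rightarrow> ereal) \<Rightarrow> bool" where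
  "convex_fun w \<longleftrightarrow> convex (epigraph_e w)"

definition conj_fun :: "('a::real_inner \<Rightarrow> ereal) \<Rightarrow> 'a \<Rightarrow> ereal" where
  "conj_fun w y = (SUP x. ereal (inner x y) - w x)"

definition l0norm :: "real^'n \<Rightarrow> nat" where
  "l0norm x = card {j. x $ j \<noteq> 0}"

definition eta :: "bool \<Rightarrow> ereal" where
  "eta b = (if b then 0 else \<infinity>)"

definition Xnu :: "'n set \<Rightarrow> 'n set \<Rightarrow> (real^'n) set" where
  "Xnu S0 S1 = {x. (\<forall>j\<in>S0. x $ j = 0) \<and> (\<forall>j\<in>S1. x $ j \<noteq> 0)}"

definition gnu :: "real \<Rightarrow> (real \<Rightarrow> ereal) \<Rightarrow> 'n::finite set \<Rightarrow> 'n set \<Rightarrow> real^'n \<Rightarrow> ereal" where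
  "gnu lam h S0 S1 x = ereal (lam * real (l0norm x)) + (\<Sum>j\<in>UNIV. h (x $ j)) + eta (x \<in> Xnu S0 S1)"

definition Dnu :: "(real^'m \<Rightarrow> ereal) \<Rightarrow> real^'n^'m \<Rightarrow> real \<Rightarrow> (real \<Rightarrow> ereal)
     \<Rightarrow> 'n::finite set \<Rightarrow> 'n set \<Rightarrow> real^'m \<Rightarrow> ereal" where
  "Dnu f A lam h S0 S1 u = - conj_fun f (- u) - conj_fun (gnu lam h S0 S1) (transpose A *v u)"

definition phi0 :: "real \<Rightarrow> (real \<Rightarrow> ereal) \<Rightarrow> real \<Rightarrow> ereal" where
  "phi0 lam h v = max (conj_fun h v - ereal lam) 0"

definition phi1 :: "real \<Rightarrow> (real \<Rightarrow> ereal) \<Rightarrow> real \<Rightarrow> ereal" where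
  "phi1 lam h v = max (ereal lam - conj_fun h v) 0"

end

theory Submission imports Defs begin

(* The conjugate of g^nu at w is the supremum of <x,w> - lambda ||x||_0 - sum_j h(x_j) over X^nu.
  Freeing coordinate i splits X^nu into the points with x_i = 0 and those with x_i <> 0; the
  latter are y + t e_i with y_i = 0 and t <> 0, and their objective exceeds that of y by
  t w_i - lambda - h(t).  Because h is convex with h(0) = 0 and 0 is an accumulation point of
  dom h, the supremum of t v - h(t) over t <> 0 is still h*(v).  So if C is the conjugate for
  i in S_0 and k = h*(a_i^T u) - lambda, the conjugates for i free and for i in S_1 are
  max(C, C + k) and C + k, and both identities reduce to extended-real arithmetic. *)

lemma SUP_Times_ereal_add:
  fixes a :: "'a \<Rightarrow> ereal" and k :: "'b \<Rightarrow> ereal"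
  assumes T: "T \<noteq> {}"
    and sup_a: "(SUP y\<in>Y. a y) \<noteq> -\<infinity>" and sup_k: "(SUP t\<in>T. k t) \<noteq> -\<infinity>"
  shows "(SUP p\<in>Y \<times> T. a (fst p) + k (snd p)) = (SUP y\<in>Y. a y) + (SUP t\<in>T. k t)"
proof (rule antisym)
  show "(SUP p\<in>Y \<times> T. a (fst p) + k (snd p)) \<le> (SUP y\<in>Y. a y) + (SUP t\<in>T. k t)"
    by (rule SUP_least) (auto intro!: add_mono SUP_upper)
  \<comment> \<open>\<open>-\<infinity> + \<infinity> = \<infinity>\<close> in \<open>ereal\<close>, so the \<open>y\<close> with \<open>a y = -\<infinity>\<close> must be dropped first\<close>
  let ?Y = "{y\<in>Y. a y \<noteq> -\<infinity>}"
  have sup_Y: "(SUP y\<in>Y. a y) = (SUP y\<in>?Y. a y)"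
  proof (rule antisym)
    show "(SUP y\<in>Y. a y) \<le> (SUP y\<in>?Y. a y)"
      by (rule SUP_least) (case_tac "a y = -\<infinity>"; auto intro: SUP_upper)
  qed (rule SUP_subset_mono; auto)
  have "?Y \<noteq> {}"
  proof
    assume "?Y = {}"
    with sup_a sup_Y show False by (simp add: bot_ereal_def)
  qed
  then have "(SUP y\<in>Y. a y) + (SUP t\<in>T. k t) = (SUP y\<in>?Y. a y + (SUP t\<in>T. k t))"
    using SUP_ereal_add_left[OF _ sup_k, of ?Y a] sup_Y by simp
  also have "\<dots> = (SUP y\<in>?Y. SUP t\<in>T. a y + k t)"
    using SUP_ereal_add_right[OF T] by (intro SUP_cong) auto
  also have "\<dots> \<le> (SUP p\<in>Y \<times> T. a (fst p) + k (snd p))"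
    by (intro SUP_least) (auto intro: SUP_upper2)
  finally show "(SUP y\<in>Y. a y) + (SUP t\<in>T. k t) \<le> (SUP p\<in>Y \<times> T. a (fst p) + k (snd p))" .
qed

lemma sum_ereal_neq_MInfty:
  fixes f :: "'a \<Rightarrow> ereal"
  shows "finite A \<Longrightarrow> (\<And>x. x \<in> A \<Longrightarrow> f x \<noteq> -\<infinity>) \<Longrightarrow> sum f A \<noteq> -\<infinity>"
  by (induct rule: finite_induct) auto

lemma proper_fun_neq_MInfty: "proper_fun w \<Longrightarrow> w x \<noteq> -\<infinity>"
  by (simp add: proper_fun_def)

lemma proper_fun_obtain_finite_nonzero:
  assumes "proper_fun h" and "0 islimpt edom h"
  obtains t c where "t \<noteq> 0" and "h t = ereal c"
proof -
  obtain t where "t \<in> edom h" and "t \<noteq> 0"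
    using assms(2) unfolding islimpt_def by blast
  then show ?thesis
    using that proper_fun_neq_MInfty[OF assms(1), of t] by (cases "h t") (auto simp: edom_def)
qed

lemma convex_fun_scaleR_le:
  fixes w :: "'a::real_vector \<Rightarrow> ereal"
  assumes "convex_fun w" and "w 0 = 0" and "w x \<le> ereal c" and "0 \<le> s" and "s \<le> 1"
  shows "w (s *\<^sub>R x) \<le> ereal (s * c)"
proof -
  have "(0, 0) \<in> epigraph_e w" and "(x, c) \<in> epigraph_e w"
    using assms(2,3) by (auto simp: epigraph_e_def)
  then have "(1 - s) *\<^sub>R (0, 0) + s *\<^sub>R (x, c) \<in> epigraph_e w"
    using assms(1,4,5) unfolding convex_fun_def by (intro convexD) auto
  then show ?thesis
    by (simp add: epigraph_e_def)
qed

lemma conj_fun_nonneg: "w 0 = 0 \<Longrightarrow> 0 \<le> conj_fun w y"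
  unfolding conj_fun_def by (rule SUP_upper2[of 0]) auto

text \<open>Since \<open>h\<close> is convex and finite at some \<open>t \<noteq> 0\<close>, the value \<open>0 * v - h 0 = 0\<close> at the
  excluded point is approached along \<open>t / (n + 1)\<close>.\<close>
lemma conj_fun_punctured:
  fixes h :: "real \<Rightarrow> ereal"
  assumes "convex_fun h" and h0: "h 0 = 0" and proper: "proper_fun h" and "0 islimpt edom h"
  shows "(SUP t\<in>-{0}. ereal (t * v) - h t) = conj_fun h v"
proof -
  let ?S = "SUP t\<in>-{0}. ereal (t * v) - h t"
  obtain t c where t: "t \<noteq> 0" "h t = ereal c"
    using proper_fun_obtain_finite_nonzero[OF proper assms(4)] by blast
  define s :: "nat \<Rightarrow> real" where "s n = inverse (real (Suc n))" for n
  have below_S: "ereal (s n * (t * v - c)) \<le> ?S" for n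
  proof -
    have s: "0 < s n" "s n \<le> 1"
      by (auto simp: s_def field_simps)
    have "h (s n * t) \<le> ereal (s n * c)"
      using convex_fun_scaleR_le[OF assms(1) h0, of t c "s n"] t s by simp
    then have "ereal (s n * (t * v - c)) \<le> ereal ((s n * t) * v) - h (s n * t)"
      using proper_fun_neq_MInfty[OF proper, of "s n * t"]
      by (cases "h (s n * t)") (auto simp: algebra_simps)
    also have "\<dots> \<le> ?S"
      using s t by (intro SUP_upper) auto
    finally show ?thesis .
  qed
  have "(\<lambda>n. ereal (s n * (t * v - c))) \<longlonglongrightarrow> ereal 0"
    unfolding s_def by (intro tendsto_ereal tendsto_mult_left_zero LIMSEQ_inverse_real_of_nat)
  then have "0 \<le> ?S"
    unfolding zero_ereal_def by (rule LIMSEQ_le_const2) (use below_S in blast)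
  then have "conj_fun h v \<le> ?S"
    unfolding conj_fun_def using h0
    by (intro SUP_least) (case_tac "x = 0"; auto simp: zero_ereal_def intro: SUP_upper)
  moreover have "?S \<le> conj_fun h v"
    unfolding conj_fun_def by (rule SUP_subset_mono) auto
  ultimately show ?thesis
    by simp
qed

definition sparse_penalty :: "real \<Rightarrow> (real \<Rightarrow> ereal) \<Rightarrow> real^'n::finite \<Rightarrow> ereal" where
  "sparse_penalty lam h x = ereal (lam * real (l0norm x)) + (\<Sum>j\<in>UNIV. h (x $ j))"

lemma sparse_penalty_neq_MInfty:
  assumes "proper_fun h"
  shows "sparse_penalty lam h x \<noteq> -\<infinity>"
proof -
  have "(\<Sum>j\<in>UNIV. h (x $ j)) \<noteq> -\<infinity>"
    by (rule sum_ereal_neq_MInfty) (simp_all add: proper_fun_neq_MInfty[OF assms])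
  then show ?thesis
    by (simp add: sparse_penalty_def)
qed

lemma conj_fun_gnu:
  assumes "proper_fun h"
  shows "conj_fun (gnu lam h S0 S1) w = (SUP x\<in>Xnu S0 S1. ereal (x \<bullet> w) - sparse_penalty lam h x)"
proof -
  have objective: "ereal (x \<bullet> w) - gnu lam h S0 S1 x =
      (if x \<in> Xnu S0 S1 then ereal (x \<bullet> w) - sparse_penalty lam h x else -\<infinity>)" for x
    using sparse_penalty_neq_MInfty[OF assms, of lam x]
    by (cases "sparse_penalty lam h x") (auto simp: gnu_def sparse_penalty_def eta_def)
  show ?thesis
    unfolding conj_fun_def objective
  proof (rule antisym)
    show "(SUP x. if x \<in> Xnu S0 S1 then ereal (x \<bullet> w) - sparse_penalty lam h x else -\<infinity>)
        \<le> (SUP x\<in>Xnu S0 S1. ereal (x \<bullet> w) - sparse_penalty lam h x)"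
      by (rule SUP_least) (auto intro: SUP_upper)
  qed (rule SUP_least, rule SUP_upper2, auto)
qed

lemma Xnu_eq_Un: "Xnu S0 S1 = Xnu (insert i S0) S1 \<union> Xnu S0 (insert i S1)"
  by (auto simp: Xnu_def)

lemma Xnu_insert_eq_image:
  assumes "i \<notin> S0" and "i \<notin> S1"
  shows "Xnu S0 (insert i S1) = (\<lambda>(y, t). y + axis i t) ` (Xnu (insert i S0) S1 \<times> -{0})"
proof
  show "Xnu S0 (insert i S1) \<subseteq> (\<lambda>(y, t). y + axis i t) ` (Xnu (insert i S0) S1 \<times> -{0})"
  proof
    fix x assume x: "x \<in> Xnu S0 (insert i S1)"
    have "x = (x - axis i (x $ i)) + axis i (x $ i)"
      by simp
    moreover have "(x - axis i (x $ i), x $ i) \<in> Xnu (insert i S0) S1 \<times> -{0}"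
      using x assms by (auto simp: Xnu_def axis_def)
    ultimately show "x \<in> (\<lambda>(y, t). y + axis i t) ` (Xnu (insert i S0) S1 \<times> -{0})"
      by (auto intro!: image_eqI)
  qed
qed (use assms in \<open>auto simp: Xnu_def axis_def split: if_splits\<close>)

lemma l0norm_add_axis:
  assumes "y $ i = 0" and "t \<noteq> 0"
  shows "l0norm (y + axis i t) = Suc (l0norm y)"
proof -
  have "{j. (y + axis i t) $ j \<noteq> 0} = insert i {j. y $ j \<noteq> 0}"
    using assms by (auto simp: axis_def)
  then show ?thesis
    using assms(1) by (simp add: l0norm_def)
qed

lemma sum_add_axis:
  fixes h :: "real \<Rightarrow> 'a::comm_monoid_add"
  assumes "y $ i = 0" and "h 0 = 0"
  shows "(\<Sum>j\<in>UNIV. h ((y + axis i t) $ j)) = (\<Sum>j\<in>UNIV. h (y $ j)) + h t"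
proof -
  have "(\<Sum>j\<in>UNIV. h ((y + axis i t) $ j)) = h t + (\<Sum>j\<in>UNIV - {i}. h (y $ j))"
    using assms(1) by (simp add: sum.remove[of _ i] axis_def)
  also have "(\<Sum>j\<in>UNIV - {i}. h (y $ j)) = (\<Sum>j\<in>UNIV. h (y $ j))"
    using assms by (simp add: sum.remove[of _ i])
  finally show ?thesis
    by (simp add: add.commute)
qed

lemma sparse_objective_add_axis:
  assumes "y $ i = 0" and "t \<noteq> 0" and "h 0 = 0" and proper: "proper_fun h"
  shows "ereal ((y + axis i t) \<bullet> w) - sparse_penalty lam h (y + axis i t)
    = (ereal (y \<bullet> w) - sparse_penalty lam h y) + (ereal (t * w $ i - lam) - h t)"
proof -
  define S where "S = (\<Sum>j\<in>UNIV. h (y $ j))"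
  have "S \<noteq> -\<infinity>" and "h t \<noteq> -\<infinity>"
    using sparse_penalty_neq_MInfty[OF proper, of lam y] proper_fun_neq_MInfty[OF proper]
    by (auto simp: S_def sparse_penalty_def)
  then show ?thesis
    unfolding sparse_penalty_def l0norm_add_axis[OF assms(1,2)]
      sum_add_axis[of y i h, OF assms(1,3)] S_def[symmetric]
    by (cases S; cases "h t") (auto simp: inner_add_left inner_axis' algebra_simps)
qed

lemma conj_fun_gnu_neq_MInfty:
  assumes proper: "proper_fun h" and "0 islimpt edom h" and h0: "h 0 = 0" and "S0 \<inter> S1 = {}"
  shows "conj_fun (gnu lam h S0 S1) w \<noteq> -\<infinity>"
proof -
  obtain t c where t: "t \<noteq> 0" "h t = ereal c"
    using proper_fun_obtain_finite_nonzero[OF proper assms(2)] by blast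
  define x where "x = (\<chi> j. if j \<in> S1 then t else 0)"
  have x: "x \<in> Xnu S0 S1"
    using assms(4) t by (auto simp: Xnu_def x_def)
  have "(\<Sum>j\<in>UNIV. h (x $ j)) \<noteq> \<infinity>"
    using t h0 by (simp add: sum_Pinfty x_def)
  then have "ereal (x \<bullet> w) - sparse_penalty lam h x \<noteq> -\<infinity>"
    using sparse_penalty_neq_MInfty[OF proper, of lam x]
    by (cases "(\<Sum>j\<in>UNIV. h (x $ j))") (auto simp: sparse_penalty_def)
  moreover have "ereal (x \<bullet> w) - sparse_penalty lam h x \<le> conj_fun (gnu lam h S0 S1) w"
    unfolding conj_fun_gnu[OF proper] using x by (rule SUP_upper)
  ultimately show ?thesis
    by auto
qed

lemma conj_fun_gnu_split:
  assumes "proper_fun h"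
  shows "conj_fun (gnu lam h S0 S1) w
    = sup (conj_fun (gnu lam h (insert i S0) S1) w) (conj_fun (gnu lam h S0 (insert i S1)) w)"
  unfolding conj_fun_gnu[OF assms] Xnu_eq_Un[of S0 S1 i] SUP_union ..

lemma conj_fun_gnu_insert_S1:
  assumes i: "i \<notin> S0" "i \<notin> S1" and "S0 \<inter> S1 = {}" and convex: "convex_fun h"
    and h0: "h 0 = 0" and proper: "proper_fun h" and acc: "0 islimpt edom h"
  shows "conj_fun (gnu lam h S0 (insert i S1)) w
    = conj_fun (gnu lam h (insert i S0) S1) w + (conj_fun h (w $ i) - ereal lam)"
proof -
  let ?obj = "\<lambda>x. ereal (x \<bullet> w) - sparse_penalty lam h x"
  have sup_shift: "(SUP t\<in>-{0}. ereal (t * w $ i - lam) - h t) = conj_fun h (w $ i) - ereal lam"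
  proof -
    have "(SUP t\<in>-{0}. ereal (t * w $ i - lam) - h t)
        = (SUP t\<in>-{0}. (ereal (t * w $ i) - h t) - ereal lam)"
      using proper_fun_neq_MInfty[OF proper] by (intro SUP_cong refl) (case_tac "h x"; simp)
    also have "\<dots> = (SUP t\<in>-{0}. ereal (t * w $ i) - h t) - ereal lam"
      by (rule SUP_ereal_minus_left) auto
    finally show ?thesis
      unfolding conj_fun_punctured[OF convex h0 proper acc] .
  qed
  have "conj_fun (gnu lam h S0 (insert i S1)) w
      = (SUP p\<in>Xnu (insert i S0) S1 \<times> -{0}. ?obj (fst p + axis i (snd p)))"
    unfolding conj_fun_gnu[OF proper] Xnu_insert_eq_image[OF i] image_image by (simp add: case_prod_beta)
  also have "\<dots> = (SUP p\<in>Xnu (insert i S0) S1 \<times> -{0}.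
      ?obj (fst p) + (ereal (snd p * w $ i - lam) - h (snd p)))"
    using h0 proper by (intro SUP_cong refl) (auto simp: Xnu_def intro!: sparse_objective_add_axis)
  also have "\<dots> = conj_fun (gnu lam h (insert i S0) S1) w + (conj_fun h (w $ i) - ereal lam)"
  proof (subst SUP_Times_ereal_add)
    show "(SUP y\<in>Xnu (insert i S0) S1. ?obj y) \<noteq> -\<infinity>"
      using conj_fun_gnu_neq_MInfty[OF proper acc h0, of "insert i S0" S1 lam w] assms(3) i(2)
      unfolding conj_fun_gnu[OF proper] by blast
    show "(SUP t\<in>-{0}. ereal (t * w $ i - lam) - h t) \<noteq> -\<infinity>"
      unfolding sup_shift using conj_fun_nonneg[of h, OF h0, of "w $ i"]
      by (cases "conj_fun h (w $ i)") auto
  qed (auto simp: sup_shift conj_fun_gnu[OF proper])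
  finally show ?thesis .
qed

lemma ereal_minus_eq_minus_sup_add_max:
  fixes G C k :: ereal
  assumes "C \<noteq> -\<infinity>" and "\<not> (G - sup C (C + k) = -\<infinity> \<and> max k 0 = \<infinity>)"
  shows "G - C = G - sup C (C + k) + max k 0"
  using assms by (cases G; cases C; cases k) (auto simp: max_def sup_ereal_def)

lemma ereal_minus_add_eq_minus_sup_add_max:
  fixes G C k :: ereal
  assumes "C \<noteq> -\<infinity>" and "k \<noteq> -\<infinity>"
  shows "G - (C + k) = G - sup C (C + k) + max (- k) 0"
  using assms by (cases G; cases C; cases k) (auto simp: max_def sup_ereal_def)

lemma column_inner_eq_transpose_mult: "column i A \<bullet> u = (transpose A *v u) $ i"
  by (metis matrix_vector_mul_component row_def row_transpose vec_lambda_eta)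

lemma Dnu_free_coordinate:
  fixes lam :: real and A :: "real^'n^'m" and u :: "real^'m"
  assumes "i \<notin> S0" and "i \<notin> S1" and "S0 \<inter> S1 = {}"
    and "convex_fun h" and "h 0 = 0" and proper: "proper_fun h" and "0 islimpt edom h"
  defines "C \<equiv> conj_fun (gnu lam h (insert i S0) S1) (transpose A *v u)"
    and "k \<equiv> conj_fun h (column i A \<bullet> u) - ereal lam"
  shows "C \<noteq> -\<infinity>" and "k \<noteq> -\<infinity>"
    and "Dnu f A lam h S0 S1 u = - conj_fun f (- u) - sup C (C + k)"
    and "Dnu f A lam h (insert i S0) S1 u = - conj_fun f (- u) - C"
    and "Dnu f A lam h S0 (insert i S1) u = - conj_fun f (- u) - (C + k)"
proof -
  show "C \<noteq> -\<infinity>"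
    unfolding C_def using assms(1-3,5,7) by (intro conj_fun_gnu_neq_MInfty[OF proper]) auto
  show "k \<noteq> -\<infinity>"
    unfolding k_def using conj_fun_nonneg[of h, OF assms(5)]
    by (cases "conj_fun h (column i A \<bullet> u)") auto
  show "Dnu f A lam h (insert i S0) S1 u = - conj_fun f (- u) - C"
    by (simp add: Dnu_def C_def)
  have insert_S1: "conj_fun (gnu lam h S0 (insert i S1)) (transpose A *v u) = C + k"
    unfolding C_def k_def column_inner_eq_transpose_mult
    using assms(1-7) by (rule conj_fun_gnu_insert_S1)
  then show "Dnu f A lam h S0 (insert i S1) u = - conj_fun f (- u) - (C + k)"
    by (simp add: Dnu_def)
  show "Dnu f A lam h S0 S1 u = - conj_fun f (- u) - sup C (C + k)"
    unfolding Dnu_def conj_fun_gnu_split[OF proper, of lam S0 S1 "transpose A *v u" i]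
      insert_S1 C_def ..
qed

theorem lemmaA3:
  fixes lam :: real and A :: "real^'n^'m" and f :: "real^'m \<Rightarrow> ereal"
    and h :: "real \<Rightarrow> ereal"
    and S0 S1 Sb S0' S1' Sb' :: "'n set" and i :: 'n and u :: "real^'m"
  assumes lam: "lam > 0"
    and f_val: "\<forall>y. f y \<noteq> -\<infinity>"
    and h_proper: "proper_fun h" and h_closed: "closed_fun h" and h_convex: "convex_fun h"
    and h_dom0: "0 \<in> edom h" and h0: "h 0 = 0" and h_acc: "0 islimpt edom h"
    and part: "S0 \<inter> S1 = {}" "S0 \<inter> Sb = {}" "S1 \<inter> Sb = {}" "S0 \<union> S1 \<union> Sb = UNIV"
    and part': "S0' \<inter> S1' = {}" "S0' \<inter> Sb' = {}" "S1' \<inter> Sb' = {}" "S0' \<union> S1' \<union> Sb' = UNIV"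
    and sub: "S0 \<subseteq> S0'" "S1 \<subseteq> S1'"
    and i: "i \<in> Sb" "(S0' - S0) \<union> (S1' - S1) = {i}"
    and well_defined: "\<not> (Dnu f A lam h S0 S1 u = -\<infinity> \<and>
        (if i \<in> S0' then phi0 lam h (column i A \<bullet> u) else phi1 lam h (column i A \<bullet> u)) = \<infinity>)"
  shows "Dnu f A lam h S0' S1' u = Dnu f A lam h S0 S1 u +
        (if i \<in> S0' then phi0 lam h (column i A \<bullet> u) else phi1 lam h (column i A \<bullet> u))"
proof -
  have i_free: "i \<notin> S0" "i \<notin> S1"
    using i(1) part(2,3) by auto
  define C where "C = conj_fun (gnu lam h (insert i S0) S1) (transpose A *v u)"
  define k where "k = conj_fun h (column i A \<bullet> u) - ereal lam"
  note D = Dnu_free_coordinate[OF i_free part(1) h_convex h0 h_proper h_acc,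
      where lam = lam and A = A and u = u, folded C_def k_def]
  show ?thesis
  proof (cases "i \<in> S0'")
    case True
    then have "S0' = insert i S0" and "S1' = S1"
      using i(2) sub part'(1) by blast+
    then show ?thesis
      using True well_defined ereal_minus_eq_minus_sup_add_max[OF D(1)]
      by (simp add: D(3,4) phi0_def k_def)
  next
    case False
    then have "S0' = S0" and "S1' = insert i S1"
      using i(2) sub unfolding set_eq_iff by auto
    moreover have "ereal lam - conj_fun h (column i A \<bullet> u) = - k"
      unfolding k_def by (cases "conj_fun h (column i A \<bullet> u)") auto
    ultimately show ?thesis
      using False ereal_minus_add_eq_minus_sup_add_max[OF D(1,2)]
      by (simp add: D(3,5) phi1_def)
  qed
qed

end
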